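(* Let $A\in\mathbb{C}^{N\times N}$, let $\mu\in\mathbb{C}$, and let $\tilde A=A-\mu I$ have singular value decomposition $\tilde A=\sum_j\tilde\sigma_j|u_j\rangle\langle v_j|$ (right singular vectors $|v_j\rangle$). For $\varepsilon>0$ let $\Pi^{(\tilde A)}_{\varepsilon}=\sum_{j:\tilde\sigma_j\leq\varepsilon}|v_j\rangle\langle v_j|$. Let $(\lambda,|v\rangle)$ be any eigenvalue–eigenvector pair of $A$ with $\||v\rangle\|=1$, let $|\psi\rangle$ be any unit vector, and let $\gamma>0$. If $|\langle v|\psi\rangle|\geq2\gamma$ and $|\mu-\lambda|\leq\varepsilon\gamma$, then $\left\|\Pi^{(\tilde A)}_{\varepsilon}|\psi\rangle\right\|\geq\gamma$. *)

theory Defs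
  imports "HOL-Analysis.Analysis"
begin

text \<open>Vectors in C^N are modelled as complex^'n (N = CARD('n)), N x N matrices as
complex^'n^'n. The Hermitian inner product <x|y> is conjugate-linear in x.\<close>

definition cinner :: "complex^'n \<Rightarrow> complex^'n \<Rightarrow> complex" where
  "cinner x y = (\<Sum>i\<in>UNIV. cnj (x $ i) * y $ i)"

definition outer :: "complex^'n \<Rightarrow> complex^'n \<Rightarrow> complex^'n^'n" where
  "outer x y = (\<chi> i k. x $ i * cnj (y $ k))"

definition orthonormal_family :: "('j \<Rightarrow> complex^'n) \<Rightarrow> bool" where
  "orthonormal_family e \<longleftrightarrow> (\<forall>j k. cinner (e j) (e k) = (if j = k then 1 else 0))"

definition is_svd :: "complex^'n^'n \<Rightarrow> ('n \<Rightarrow> real) \<Rightarrow> ('n \<Rightarrow> complex^'n) \<Rightarrow> ('n \<Rightarrow> complex^'n) \<Rightarrow> bool" where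
  "is_svd M \<sigma> u v \<longleftrightarrow> (\<forall>j. \<sigma> j \<ge> 0) \<and> orthonormal_family u \<and> orthonormal_family v \<and>
     M = (\<Sum>j\<in>UNIV. outer (complex_of_real (\<sigma> j) *s u j) (v j))"

definition svd_proj :: "real \<Rightarrow> ('n \<Rightarrow> real) \<Rightarrow> ('n \<Rightarrow> complex^'n) \<Rightarrow> complex^'n^'n" where
  "svd_proj \<epsilon> \<sigma> v = (\<Sum>j\<in>{j. \<sigma> j \<le> \<epsilon>}. outer (v j) (v j))"

end

theory Submission
  imports Defs
begin

text \<open>Let \<open>Pi\<close> be the projection onto the right singular vectors of \<open>A - \<mu>I\<close> with singular
value at most \<open>\<epsilon>\<close> and \<open>Pi'\<close> the complementary projection. Since \<open>A - \<mu>I\<close> stretches the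
component along each other right singular vector by more than \<open>\<epsilon>\<close>, and the eigenvector \<open>w\<close>
satisfies \<open>|(A - \<mu>I) w| = |\<lambda> - \<mu>| \<le> \<epsilon>\<gamma>\<close>, we get \<open>|Pi' w| \<le> \<gamma>\<close>. Splitting
\<open>\<psi> = Pi' \<psi> + Pi \<psi>\<close> and moving the self-adjoint \<open>Pi'\<close> onto \<open>w\<close>,
\<open>2\<gamma> \<le> |<w|\<psi>>| \<le> |Pi' w| + |Pi \<psi>| \<le> \<gamma> + |Pi \<psi>|\<close>.\<close>

lemma cinner_sum_left: "cinner (\<Sum>j\<in>S. f j) y = (\<Sum>j\<in>S. cinner (f j) y)"
  unfolding cinner_def sum_component by (simp add: sum_distrib_right sum.swap[of _ S])

lemma cinner_sum_right: "cinner x (\<Sum>j\<in>S. f j) = (\<Sum>j\<in>S. cinner x (f j))"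
  unfolding cinner_def sum_component by (simp add: sum_distrib_left sum.swap[of _ S])

lemma cinner_scale_left: "cinner (a *s x) y = cnj a * cinner x y"
  unfolding cinner_def by (simp add: sum_distrib_left algebra_simps)

lemma cinner_scale_right: "cinner x (a *s y) = a * cinner x y"
  unfolding cinner_def by (simp add: sum_distrib_left algebra_simps)

lemma cinner_add_right: "cinner x (y + z) = cinner x y + cinner x z"
  unfolding cinner_def by (simp add: sum.distrib algebra_simps)

lemma cnj_cinner: "cnj (cinner x y) = cinner y x"
  unfolding cinner_def by (simp add: mult.commute)

lemma cnj_mult_self: "cnj z * z = of_real ((norm z)\<^sup>2)"
  by (metis complex_norm_square mult.commute of_real_power)

lemma cinner_self_eq_norm_power2: "cinner x x = of_real ((norm x)\<^sup>2)"
proof -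
  have "cinner x x = of_real (\<Sum>i\<in>UNIV. (norm (x $ i))\<^sup>2)"
    unfolding cinner_def of_real_sum by (simp add: cnj_mult_self)
  also have "(\<Sum>i\<in>UNIV. (norm (x $ i))\<^sup>2) = (norm x)\<^sup>2"
    unfolding norm_vec_def L2_set_def by (simp add: sum_nonneg)
  finally show ?thesis .
qed

lemma norm_cinner_le: "norm (cinner x y) \<le> norm x * norm y"
proof -
  have "norm (cinner x y) \<le> (\<Sum>i\<in>UNIV. norm (cnj (x $ i) * y $ i))"
    unfolding cinner_def by (rule norm_sum)
  also have "\<dots> = (\<Sum>i\<in>UNIV. \<bar>norm (x $ i)\<bar> * \<bar>norm (y $ i)\<bar>)"
    by (simp add: norm_mult)
  also have "\<dots> \<le> L2_set (\<lambda>i. norm (x $ i)) UNIV * L2_set (\<lambda>i. norm (y $ i)) UNIV"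
    by (rule L2_set_mult_ineq)
  finally show ?thesis unfolding norm_vec_def .
qed

lemma outer_mult_vector: "outer a b *v x = cinner b x *s a"
  unfolding outer_def cinner_def matrix_vector_mult_def
  by (simp add: vec_eq_iff sum_distrib_left mult_ac)

lemma sum_matrix_vector_mult: "(\<Sum>j\<in>S. M j) *v x = (\<Sum>j\<in>S. M j *v x)"
  unfolding matrix_vector_mult_def
  by (simp add: vec_eq_iff sum_component sum_distrib_right sum.swap[of _ S])

lemma mat_mult_vector: "mat c *v x = c *s x"
  unfolding matrix_vector_mult_def mat_def
  by (simp add: vec_eq_iff if_distrib[of "\<lambda>a. a * _"] cong: if_cong)

lemma norm_scale_vector: "norm (c *s x) = norm c * norm (x :: 'a::real_normed_field^'n)"
  unfolding norm_vec_def by (simp add: L2_set_right_distrib norm_mult)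

lemma cinner_orthonormal_sums:
  fixes e :: "'j::finite \<Rightarrow> complex^'n"
  assumes "orthonormal_family e"
  shows "cinner (\<Sum>j\<in>S. a j *s e j) (\<Sum>k\<in>S. b k *s e k) = (\<Sum>j\<in>S. cnj (a j) * b j)"
proof -
  have "cinner (\<Sum>j\<in>S. a j *s e j) (\<Sum>k\<in>S. b k *s e k)
      = (\<Sum>j\<in>S. \<Sum>k\<in>S. cnj (a j) * b k * cinner (e j) (e k))"
    unfolding cinner_sum_left cinner_sum_right cinner_scale_left cinner_scale_right
    by (subst sum.swap) (simp add: sum_distrib_left mult_ac)
  also have "\<dots> = (\<Sum>j\<in>S. cnj (a j) * b j)"
    using assms unfolding orthonormal_family_def by (simp add: if_distrib[of "(*) _"] cong: if_cong)
  finally show ?thesis .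
qed

lemma norm_orthonormal_sum_power2:
  fixes e :: "'j::finite \<Rightarrow> complex^'n"
  assumes "orthonormal_family e"
  shows "(norm (\<Sum>j\<in>S. a j *s e j))\<^sup>2 = (\<Sum>j\<in>S. (norm (a j))\<^sup>2)"
proof -
  have "complex_of_real ((norm (\<Sum>j\<in>S. a j *s e j))\<^sup>2) = of_real (\<Sum>j\<in>S. (norm (a j))\<^sup>2)"
    unfolding cinner_self_eq_norm_power2[symmetric] cinner_orthonormal_sums[OF assms]
    by (simp add: cnj_mult_self)
  then show ?thesis
    by (simp only: of_real_eq_iff)
qed

text \<open>Completeness needs the family to be indexed by \<open>'n\<close> itself: the matrix with rows
\<open>v j\<close> is then square, and a one-sided inverse of a square matrix is two-sided.\<close>

lemma orthonormal_family_expansion: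
  fixes v :: "'n::finite \<Rightarrow> complex^'n"
  assumes "orthonormal_family v"
  shows "(\<Sum>j\<in>UNIV. cinner (v j) x *s v j) = x"
proof -
  define V :: "complex^'n^'n" where "V = (\<chi> j i. cnj (v j $ i))"
  define W :: "complex^'n^'n" where "W = (\<chi> i j. v j $ i)"
  have "V ** W = mat 1"
    using assms unfolding orthonormal_family_def
    by (simp add: vec_eq_iff matrix_matrix_mult_def V_def W_def mat_def cinner_def)
  then have "W ** V = mat 1"
    using matrix_left_right_inverse by blast
  then have WV: "(\<Sum>j\<in>UNIV. v j $ i * cnj (v j $ k)) = (if i = k then 1 else 0)" for i k
    by (simp add: vec_eq_iff matrix_matrix_mult_def V_def W_def mat_def)
  have "(\<Sum>j\<in>UNIV. cinner (v j) x *s v j) $ i = x $ i" for i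
  proof -
    have "(\<Sum>j\<in>UNIV. cinner (v j) x *s v j) $ i
        = (\<Sum>j\<in>UNIV. \<Sum>k\<in>UNIV. v j $ i * cnj (v j $ k) * x $ k)"
      unfolding sum_component cinner_def by (simp add: sum_distrib_left mult_ac)
    also have "\<dots> = (\<Sum>k\<in>UNIV. (\<Sum>j\<in>UNIV. v j $ i * cnj (v j $ k)) * x $ k)"
      by (subst sum.swap) (simp add: sum_distrib_right)
    also have "\<dots> = x $ i"
      by (simp add: WV if_distrib[of "\<lambda>c. c * _"] cong: if_cong)
    finally show ?thesis .
  qed
  then show ?thesis
    by (simp add: vec_eq_iff)
qed

definition onb_proj :: "('j \<Rightarrow> complex^'n) \<Rightarrow> 'j set \<Rightarrow> complex^'n \<Rightarrow> complex^'n" where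
  "onb_proj e S x = (\<Sum>j\<in>S. cinner (e j) x *s e j)"

lemma cinner_onb_proj_left: "cinner (onb_proj e S x) y = cinner x (onb_proj e S y)"
  unfolding onb_proj_def cinner_sum_left cinner_sum_right cinner_scale_left cinner_scale_right
  by (simp add: cnj_cinner mult.commute)

lemma norm_onb_proj_power2:
  fixes e :: "'j::finite \<Rightarrow> complex^'n"
  assumes "orthonormal_family e"
  shows "(norm (onb_proj e S x))\<^sup>2 = (\<Sum>j\<in>S. (norm (cinner (e j) x))\<^sup>2)"
  unfolding onb_proj_def by (rule norm_orthonormal_sum_power2[OF assms])

lemma onb_proj_add_compl:
  fixes v :: "'n::finite \<Rightarrow> complex^'n"
  assumes "orthonormal_family v"
  shows "onb_proj v (- S) x + onb_proj v S x = x"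
proof -
  have "(\<Sum>j\<in>UNIV. cinner (v j) x *s v j)
      = (\<Sum>j\<in>UNIV - S. cinner (v j) x *s v j) + (\<Sum>j\<in>S. cinner (v j) x *s v j)"
    by (rule sum.subset_diff) auto
  then show ?thesis
    unfolding onb_proj_def Compl_eq_Diff_UNIV orthonormal_family_expansion[OF assms] by simp
qed

lemma norm_cinner_le_onb_proj_split:
  fixes v :: "'n::finite \<Rightarrow> complex^'n"
  assumes "orthonormal_family v"
  shows "norm (cinner w x) \<le> norm (onb_proj v (- S) w) * norm x + norm w * norm (onb_proj v S x)"
proof -
  have "cinner w x = cinner w (onb_proj v (- S) x + onb_proj v S x)"
    by (simp add: onb_proj_add_compl[OF assms])
  also have "\<dots> = cinner (onb_proj v (- S) w) x + cinner w (onb_proj v S x)"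
    by (simp add: cinner_add_right cinner_onb_proj_left)
  finally have "norm (cinner w x)
      \<le> norm (cinner (onb_proj v (- S) w) x) + norm (cinner w (onb_proj v S x))"
    by (simp add: norm_triangle_ineq)
  also have "\<dots> \<le> norm (onb_proj v (- S) w) * norm x + norm w * norm (onb_proj v S x)"
    by (intro add_mono norm_cinner_le)
  finally show ?thesis .
qed

lemma svd_proj_mult_vector: "svd_proj \<epsilon> \<sigma> v *v x = onb_proj v {j. \<sigma> j \<le> \<epsilon>} x"
  unfolding svd_proj_def sum_matrix_vector_mult outer_mult_vector onb_proj_def ..

lemma svd_mult_vector:
  assumes "is_svd M \<sigma> u v"
  shows "M *v x = (\<Sum>j\<in>UNIV. (of_real (\<sigma> j) * cinner (v j) x) *s u j)"
  using assms unfolding is_svd_def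
  by (simp add: sum_matrix_vector_mult outer_mult_vector mult.commute)

lemma norm_svd_mult_vector_power2:
  assumes "is_svd M \<sigma> u v"
  shows "(norm (M *v x))\<^sup>2 = (\<Sum>j\<in>UNIV. (\<sigma> j * norm (cinner (v j) x))\<^sup>2)"
proof -
  have "orthonormal_family u" and "\<And>j. \<sigma> j \<ge> 0"
    using assms unfolding is_svd_def by auto
  then show ?thesis
    unfolding svd_mult_vector[OF assms] norm_orthonormal_sum_power2[OF \<open>orthonormal_family u\<close>]
    by (simp add: norm_mult)
qed

lemma norm_onb_proj_large_singular_values:
  assumes svd: "is_svd M \<sigma> u v" and "\<epsilon> \<ge> 0"
  shows "\<epsilon> * norm (onb_proj v {j. \<sigma> j > \<epsilon>} x) \<le> norm (M *v x)"
proof -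
  let ?c = "\<lambda>j. norm (cinner (v j) x)"
  have "orthonormal_family v"
    using svd unfolding is_svd_def by auto
  have "(\<epsilon> * norm (onb_proj v {j. \<sigma> j > \<epsilon>} x))\<^sup>2 = (\<Sum>j\<in>{j. \<sigma> j > \<epsilon>}. (\<epsilon> * ?c j)\<^sup>2)"
    by (simp add: power_mult_distrib norm_onb_proj_power2[OF \<open>orthonormal_family v\<close>]
        sum_distrib_left)
  also have "\<dots> \<le> (\<Sum>j\<in>{j. \<sigma> j > \<epsilon>}. (\<sigma> j * ?c j)\<^sup>2)"
    using \<open>\<epsilon> \<ge> 0\<close> by (intro sum_mono power_mono mult_right_mono) auto
  also have "\<dots> \<le> (\<Sum>j\<in>UNIV. (\<sigma> j * ?c j)\<^sup>2)"
    by (intro sum_mono2) auto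
  also have "\<dots> = (norm (M *v x))\<^sup>2"
    by (rule norm_svd_mult_vector_power2[OF svd, symmetric])
  finally show ?thesis
    by (rule power2_le_imp_le) simp
qed

theorem lemma2:
  fixes A :: "complex^'n^'n" and \<mu> lam :: complex and \<epsilon> \<gamma> :: real
    and \<sigma> :: "'n \<Rightarrow> real" and u v :: "'n \<Rightarrow> complex^'n" and w \<psi> :: "complex^'n"
  assumes svd: "is_svd (A - mat \<mu>) \<sigma> u v"
    and eps: "\<epsilon> > 0"
    and eig: "A *v w = lam *s w" and wnorm: "norm w = 1"
    and psinorm: "norm \<psi> = 1"
    and gam: "\<gamma> > 0"
    and overlap: "norm (cinner w \<psi>) \<ge> 2 * \<gamma>"
    and close: "norm (\<mu> - lam) \<le> \<epsilon> * \<gamma>"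
  shows "norm (svd_proj \<epsilon> \<sigma> v *v \<psi>) \<ge> \<gamma>"
proof -
  let ?S = "{j. \<sigma> j \<le> \<epsilon>}"
  have shifted_eig: "(A - mat \<mu>) *v w = (lam - \<mu>) *s w"
    by (simp add: matrix_vector_mult_diff_rdistrib eig mat_mult_vector vector_sub_rdistrib)
  have "norm ((A - mat \<mu>) *v w) = norm (\<mu> - lam)"
    unfolding shifted_eig norm_scale_vector wnorm by (simp add: norm_minus_commute)
  also have "\<dots> \<le> \<epsilon> * \<gamma>"
    by (rule close)
  moreover have "- ?S = {j. \<sigma> j > \<epsilon>}"
    by auto
  ultimately have "\<epsilon> * norm (onb_proj v (- ?S) w) \<le> \<epsilon> * \<gamma>"
    using norm_onb_proj_large_singular_values[OF svd less_imp_le[OF eps], of w]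
    by (simp only:)
  then have "norm (onb_proj v (- ?S) w) \<le> \<gamma>"
    using eps by simp
  moreover have "norm (cinner w \<psi>)
      \<le> norm (onb_proj v (- ?S) w) * norm \<psi> + norm w * norm (onb_proj v ?S \<psi>)"
    using svd unfolding is_svd_def by (blast intro: norm_cinner_le_onb_proj_split)
  ultimately show ?thesis
    using overlap psinorm wnorm by (simp add: svd_proj_mult_vector)
qed

end
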